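(* Let $G$ be a finite simple graph with at least one edge and let $I=I(G)$ be its edge ideal. Then $v(I^{n+1})\le 2n+v(I)$ for all $n\ge 1$.
   Context: $K$ is a field and $S=K[x_1,\dots,x_t]$ is standard graded, with the vertices of $G$ being $x_1,\dots,x_t$. The edge ideal is $I(G)=\langle x_ix_j : \{x_i,x_j\}\text{ an edge of } G\rangle$. For a proper graded ideal $J$, the $v$-number is $v(J)=\min\{k\ge 0 : \exists f\in S_k,\ \mathcal P\in\operatorname{Ass}(S/J) \text{ with } (J:f)=\mathcal P\}$. *)

theory Defs
  imports Main "HOL-Library.Poly_Mapping"
begin

(* The polynomial ring S = K[x_v : v in 'v] over a field K, with finitely many
   variables indexed by the finite type 'v (the vertex set of G). *)
type_synonym ('v, 'k) mpoly = "('v \<Rightarrow>\<^sub>0 nat) \<Rightarrow>\<^sub>0 'k"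

definition var :: "'v \<Rightarrow> ('v, 'k::field) mpoly" where
  "var v = Poly_Mapping.single (Poly_Mapping.single v 1) 1"

definition mon_deg :: "('v::finite \<Rightarrow>\<^sub>0 nat) \<Rightarrow> nat" where
  "mon_deg m = (\<Sum>v\<in>UNIV. Poly_Mapping.lookup m v)"

(* f lies in S_k: homogeneous of degree k (0 counts as homogeneous of every degree) *)
definition homogeneous_of_deg :: "nat \<Rightarrow> ('v::finite, 'k::field) mpoly \<Rightarrow> bool" where
  "homogeneous_of_deg k f \<longleftrightarrow> (\<forall>m\<in>Poly_Mapping.keys f. mon_deg m = k)"

definition is_ideal :: "'a::comm_ring_1 set \<Rightarrow> bool" where
  "is_ideal I \<longleftrightarrow> 0 \<in> I \<and> (\<forall>a\<in>I. \<forall>b\<in>I. a + b \<in> I) \<and> (\<forall>a\<in>I. \<forall>r. r * a \<in> I)"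

definition ideal_gen :: "'a::comm_ring_1 set \<Rightarrow> 'a set" where
  "ideal_gen A = \<Inter>{I. is_ideal I \<and> A \<subseteq> I}"

definition ideal_mult :: "'a::comm_ring_1 set \<Rightarrow> 'a set \<Rightarrow> 'a set" where
  "ideal_mult I J = ideal_gen {a * b | a b. a \<in> I \<and> b \<in> J}"

fun ideal_pow :: "'a::comm_ring_1 set \<Rightarrow> nat \<Rightarrow> 'a set" where
  "ideal_pow I 0 = UNIV"
| "ideal_pow I (Suc n) = ideal_mult I (ideal_pow I n)"

definition colon :: "'a::comm_ring_1 set \<Rightarrow> 'a \<Rightarrow> 'a set" where
  "colon J f = {g. g * f \<in> J}"

definition prime_ideal :: "'a::comm_ring_1 set \<Rightarrow> bool" where
  "prime_ideal P \<longleftrightarrow> is_ideal P \<and> P \<noteq> UNIV \<and> (\<forall>a b. a * b \<in> P \<longrightarrow> a \<in> P \<or> b \<in> P)"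

definition ass :: "'a::comm_ring_1 set \<Rightarrow> 'a set set" where
  "ass J = {P. prime_ideal P \<and> (\<exists>f. colon J f = P)}"

definition v_number :: "('v::finite, 'k::field) mpoly set \<Rightarrow> nat" where
  "v_number J = (LEAST k. \<exists>f P. homogeneous_of_deg k f \<and> P \<in> ass J \<and> colon J f = P)"

definition simple_graph :: "'v set set \<Rightarrow> bool" where
  "simple_graph E \<longleftrightarrow> (\<forall>e\<in>E. card e = 2)"

definition edge_ideal :: "'v set set \<Rightarrow> ('v, 'k::field) mpoly set" where
  "edge_ideal E = ideal_gen {var i * var j | i j. {i, j} \<in> E}"

end

theory Submission
  imports Defs "HOL-Library.Countable"
begin

(* Write x_A for the product of the variables of a vertex set A and N(A) for the set of
   neighbours of A. Let A be independent with N(A) a vertex cover, and let {a, b} be an edge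
   with a in A. Every monomial of I^(k+1) has degree at least k + 1 in the variables of N(A),
   while x_A (x_a x_b)^k has degree exactly k in them; and for c in N(A), adjacent to some
   a' in A, x_c x_A (x_a x_b)^k is a multiple of x_a' x_c (x_a x_b)^k, which lies in I^(k+1).
   So (I^(k+1) : x_A (x_a x_b)^k) is the prime ideal generated by the variables of N(A), and
   v(I^(k+1)) <= |A| + 2k.
   Conversely, let (I : f) be prime with f homogeneous of degree v(I). As I is a monomial
   ideal and f is not in I, some monomial x^m of f is divisible by no edge; its support A is
   independent and |A| <= v(I). The variables lying in (I : f) form a vertex cover, and each
   of them, x_v, satisfies x_v x^m in I, which forces v into N(A). Hence N(A) is a vertex
   cover, and the first part with k = n gives the bound. *)

section \<open>Monomials and ideals\<close>

definition monomial :: "('v \<Rightarrow>\<^sub>0 nat) \<Rightarrow> ('v, 'k::field) mpoly" where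
  "monomial m = Poly_Mapping.single m 1"

lemma monomial_add: "monomial (m + n) = (monomial m * monomial n :: ('v, 'k::field) mpoly)"
  by (simp add: monomial_def mult_single)

lemma var_eq_monomial: "var v = monomial (Poly_Mapping.single v 1)"
  by (simp add: var_def monomial_def)

lemma monomial_single_power:
  "(monomial (Poly_Mapping.single v 1) :: ('v, 'k::field) mpoly) ^ k = monomial (Poly_Mapping.single v k)"
  by (induction k) (simp_all add: monomial_def mult_single flip: single_add)

lemma keys_monomial_mult:
  "Poly_Mapping.keys (monomial n * (p :: ('v, 'k::field) mpoly)) = (+) n ` Poly_Mapping.keys p"
proof -
  have "Poly_Mapping.lookup (monomial n * p) (n + m) = Poly_Mapping.lookup p m" for m
    by (simp add: monomial_def lookup_mult lookup_single when_mult mult_when)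
  then show ?thesis
    using keys_mult[of "monomial n" p] by (force simp: monomial_def in_keys_iff)
qed

lemma keys_single_add:
  fixes m :: "'v \<Rightarrow>\<^sub>0 nat"
  shows "0 < k \<Longrightarrow> Poly_Mapping.keys (Poly_Mapping.single v k + m) = insert v (Poly_Mapping.keys m)"
  by (auto simp: in_keys_iff lookup_add lookup_single when_def split: if_splits)

lemma mpoly_eq_sum_monomials:
  "(p :: ('v, 'k::field) mpoly) = (\<Sum>m\<in>Poly_Mapping.keys p. Poly_Mapping.single 0 (Poly_Mapping.lookup p m) * monomial m)"
  by (rule poly_mapping_eqI)
     (simp add: monomial_def mult_single lookup_sum lookup_single when_def in_keys_iff)

lemma is_idealD:
  assumes "is_ideal I"
  shows "0 \<in> I" and "a \<in> I \<Longrightarrow> b \<in> I \<Longrightarrow> a + b \<in> I"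
    and "a \<in> I \<Longrightarrow> r * a \<in> I"
  using assms unfolding is_ideal_def by auto

lemma ideal_sum_mem:
  assumes "is_ideal I" and "\<And>x. x \<in> S \<Longrightarrow> f x \<in> I"
  shows "sum f S \<in> I"
  using assms(2) by (induction S rule: infinite_finite_induct) (simp_all add: is_idealD[OF assms(1)])

lemma is_ideal_ideal_gen: "is_ideal (ideal_gen A)"
  unfolding ideal_gen_def is_ideal_def by auto

lemma ideal_gen_superset: "A \<subseteq> ideal_gen A"
  unfolding ideal_gen_def by auto

lemma ideal_gen_least: "is_ideal J \<Longrightarrow> A \<subseteq> J \<Longrightarrow> ideal_gen A \<subseteq> J"
  unfolding ideal_gen_def by auto

lemma ideal_mult_mem: "a \<in> I \<Longrightarrow> b \<in> J \<Longrightarrow> a * b \<in> ideal_mult I J"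
  unfolding ideal_mult_def by (rule subsetD[OF ideal_gen_superset]) blast

lemma ideal_mult_least:
  "is_ideal K \<Longrightarrow> (\<And>a b. a \<in> I \<Longrightarrow> b \<in> J \<Longrightarrow> a * b \<in> K)
    \<Longrightarrow> ideal_mult I J \<subseteq> K"
  unfolding ideal_mult_def by (rule ideal_gen_least) blast+

lemma is_ideal_UNIV: "is_ideal UNIV"
  unfolding is_ideal_def by simp

lemma is_ideal_ideal_mult: "is_ideal (ideal_mult I J)"
  unfolding ideal_mult_def by (rule is_ideal_ideal_gen)

lemma is_ideal_ideal_pow: "is_ideal (ideal_pow I k)"
  by (cases k) (simp_all add: is_ideal_ideal_mult is_ideal_UNIV)

lemma ideal_pow_1:
  assumes "is_ideal I"
  shows "ideal_pow I 1 = I"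
proof -
  have "ideal_mult I UNIV \<subseteq> I"
    by (rule ideal_mult_least[OF assms]) (metis is_idealD(3)[OF assms] mult.commute)
  moreover have "I \<subseteq> ideal_mult I UNIV"
    using ideal_mult_mem[of _ I 1 UNIV] by auto
  ultimately show ?thesis by simp
qed

lemma power_mem_ideal_pow: "a \<in> I \<Longrightarrow> a ^ k \<in> ideal_pow I k"
  by (induction k) (simp_all add: ideal_mult_mem)

lemma is_ideal_colon:
  assumes "is_ideal J"
  shows "is_ideal (colon J f)"
  unfolding is_ideal_def colon_def
  by (simp add: is_idealD[OF assms] distrib_right mult.assoc)

lemma ideal_subset_colon: "is_ideal J \<Longrightarrow> J \<subseteq> colon J f"
  unfolding colon_def using is_idealD(3) by (fastforce simp: mult.commute)

lemma mem_ideal_if_monomials_mem: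
  assumes "is_ideal J" and "\<And>m. m \<in> Poly_Mapping.keys p \<Longrightarrow> monomial m \<in> J"
  shows "(p :: ('v, 'k::field) mpoly) \<in> J"
  by (subst mpoly_eq_sum_monomials) (simp add: ideal_sum_mem assms is_idealD(3))

section \<open>Polynomial rings have no zero divisors\<close>

lemma lookup_mult_pairs:
  "Poly_Mapping.lookup (f * g) k = (\<Sum>(a, b). Poly_Mapping.lookup f a * Poly_Mapping.lookup g b when k = a + b)"
  by transfer (simp add: prod_fun_unfold_prod)

lemma mult_neq_zero_if_additive_embedding:
  fixes h :: "'a::cancel_comm_monoid_add \<Rightarrow> 'c::{ordered_cancel_comm_monoid_add, linorder}"
    and f g :: "'a \<Rightarrow>\<^sub>0 'b::{comm_semiring_1, semiring_no_zero_divisors}"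
  assumes "inj h" and h_add: "\<And>x y. h (x + y) = h x + h y" and "f \<noteq> 0" and "g \<noteq> 0"
  shows "f * g \<noteq> 0"
proof -
  \<comment> \<open>the product of the h-largest monomials of f and g survives in f * g\<close>
  have max_key: "\<exists>a\<in>Poly_Mapping.keys p. \<forall>x\<in>Poly_Mapping.keys p. h x \<le> h a"
    if "p \<noteq> 0" for p :: "'a \<Rightarrow>\<^sub>0 'b"
  proof -
    have "Max (h ` Poly_Mapping.keys p) \<in> h ` Poly_Mapping.keys p"
      using that by (intro Max_in) auto
    then show ?thesis by (metis Max_ge finite_imageI finite_keys imageE imageI)
  qed
  obtain a where a: "a \<in> Poly_Mapping.keys f" "\<And>x. x \<in> Poly_Mapping.keys f \<Longrightarrow> h x \<le> h a"
    using max_key[OF \<open>f \<noteq> 0\<close>] by blast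
  obtain b where b: "b \<in> Poly_Mapping.keys g" "\<And>y. y \<in> Poly_Mapping.keys g \<Longrightarrow> h y \<le> h b"
    using max_key[OF \<open>g \<noteq> 0\<close>] by blast
  have unique: "(x, y) = (a, b)"
    if "x + y = a + b" "x \<in> Poly_Mapping.keys f" "y \<in> Poly_Mapping.keys g" for x y
  proof -
    have sum_eq: "h x + h y = h a + h b" using h_add[of x y] h_add[of a b] that(1) by simp
    have le: "h x \<le> h a" "h y \<le> h b" using a(2) b(2) that(2,3) by auto
    have "\<not> h x < h a" using add_less_le_mono[OF _ le(2), of "h x" "h a"] sum_eq by auto
    moreover have "\<not> h y < h b" using add_le_less_mono[OF le(1), of "h y" "h b"] sum_eq by auto
    ultimately have "h x = h a" "h y = h b" using le by (simp_all add: order_le_less)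
    then show ?thesis using \<open>inj h\<close> by (simp add: inj_eq)
  qed
  have "Poly_Mapping.lookup (f * g) (a + b)
      = (\<Sum>xy. (case xy of (x, y) \<Rightarrow> Poly_Mapping.lookup f x * Poly_Mapping.lookup g y) when (a, b) = xy)"
    unfolding lookup_mult_pairs
  proof (intro Sum_any.cong, clarify)
    fix x y
    show "(Poly_Mapping.lookup f x * Poly_Mapping.lookup g y when a + b = x + y)
        = (Poly_Mapping.lookup f x * Poly_Mapping.lookup g y when (a, b) = (x, y))"
      using unique[of x y] by (simp add: when_def in_keys_iff) (metis mult_not_zero)
  qed
  also have "\<dots> = Poly_Mapping.lookup f a * Poly_Mapping.lookup g b"
    by simp
  also have "\<dots> \<noteq> 0" using a(1) b(1) by (simp add: in_keys_iff)
  finally show ?thesis by auto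
qed

lemma mpoly_mult_neq_zero:
  fixes f g :: "('v::countable \<Rightarrow>\<^sub>0 nat) \<Rightarrow>\<^sub>0 'b::{comm_semiring_1, semiring_no_zero_divisors}"
  assumes "f \<noteq> 0" and "g \<noteq> 0"
  shows "f * g \<noteq> 0"
proof -
  \<comment> \<open>monomials over 'v carry no order, so embed them into the linearly ordered
     exponent vectors indexed by nat\<close>
  define h :: "('v \<Rightarrow>\<^sub>0 nat) \<Rightarrow> nat \<Rightarrow>\<^sub>0 nat" where
    "h m = Abs_poly_mapping
       (\<lambda>n. if n \<in> range (to_nat :: 'v \<Rightarrow> nat) then Poly_Mapping.lookup m (from_nat n) else 0)" for m
  have lookup_h: "Poly_Mapping.lookup (h m)
      = (\<lambda>n. if n \<in> range (to_nat :: 'v \<Rightarrow> nat) then Poly_Mapping.lookup m (from_nat n) else 0)" for m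
    unfolding h_def
    by (rule lookup_Abs_poly_mapping)
       (rule finite_subset[of _ "to_nat ` Poly_Mapping.keys m"], auto simp: in_keys_iff)
  have "Poly_Mapping.lookup (h m) (to_nat v) = Poly_Mapping.lookup m v" for m v
    by (simp add: lookup_h)
  then have "inj h"
    by (metis injI poly_mapping_eqI)
  moreover have "h (m + n) = h m + h n" for m n
    by (rule poly_mapping_eqI) (simp add: lookup_h lookup_add)
  ultimately show ?thesis
    using mult_neq_zero_if_additive_embedding assms by blast
qed

section \<open>Monomial ideals\<close>

definition monomial_span :: "(('v \<Rightarrow>\<^sub>0 nat) \<Rightarrow> bool) \<Rightarrow> ('v, 'k::field) mpoly set" where
  "monomial_span Q = {p. \<forall>m\<in>Poly_Mapping.keys p. Q m}"

lemma monomial_in_monomial_span [simp]: "monomial m \<in> monomial_span Q \<longleftrightarrow> Q m"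
  by (simp add: monomial_span_def monomial_def)

lemma monomial_span_mult:
  assumes "\<And>m n. Q m \<Longrightarrow> R n \<Longrightarrow> S (m + n)"
    and "p \<in> monomial_span Q" and "q \<in> monomial_span R"
  shows "p * q \<in> monomial_span S"
  using keys_mult[of p q] assms unfolding monomial_span_def by blast

lemma is_ideal_monomial_span:
  fixes Q :: "('v \<Rightarrow>\<^sub>0 nat) \<Rightarrow> bool"
  assumes "\<And>m n. Q n \<Longrightarrow> Q (m + n)"
  shows "is_ideal (monomial_span Q :: ('v, 'k::field) mpoly set)"
  unfolding is_ideal_def
proof (intro conjI ballI allI)
  fix p q r :: "('v, 'k) mpoly"
  assume "p \<in> monomial_span Q"
  moreover have "r \<in> monomial_span (\<lambda>_. True)" by (simp add: monomial_span_def)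
  ultimately show "r * p \<in> monomial_span Q" using assms by (blast intro: monomial_span_mult)
  assume "q \<in> monomial_span Q"
  with \<open>p \<in> monomial_span Q\<close> show "p + q \<in> monomial_span Q"
    using keys_add[of p q] unfolding monomial_span_def by blast
qed (simp add: monomial_span_def)

lemma monomial_mem_if_divides:
  assumes "is_ideal J" and "monomial n \<in> J" and "Poly_Mapping.lookup n \<le> Poly_Mapping.lookup m"
  shows "monomial m \<in> (J :: ('v, 'k::field) mpoly set)"
proof -
  have "m = (m - n) + n"
    using assms(3) by (intro poly_mapping_eqI) (simp add: lookup_add lookup_minus le_fun_def)
  then have "monomial m = monomial (m - n) * (monomial n :: ('v, 'k) mpoly)"
    by (metis monomial_add)
  then show ?thesis using is_idealD(3)[OF assms(1,2)] by simp
qed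

lemma ideal_gen_monomials:
  "ideal_gen (monomial ` G)
     = (monomial_span (\<lambda>m. \<exists>n\<in>G. Poly_Mapping.lookup n \<le> Poly_Mapping.lookup m) :: ('v, 'k::field) mpoly set)"
  (is "_ = ?S")
proof
  have "is_ideal ?S"
    by (rule is_ideal_monomial_span) (force simp: lookup_add le_fun_def intro: trans_le_add2)
  then show "ideal_gen (monomial ` G) \<subseteq> ?S"
    by (rule ideal_gen_least) auto
  show "?S \<subseteq> ideal_gen (monomial ` G)"
  proof
    fix p
    assume "p \<in> ?S"
    then show "p \<in> ideal_gen (monomial ` G)"
      unfolding monomial_span_def
      by (blast intro: mem_ideal_if_monomials_mem is_ideal_ideal_gen monomial_mem_if_divides
                       ideal_gen_superset[THEN subsetD])
  qed
qed

lemma prime_ideal_monomial_span: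
  fixes Q :: "('v::countable \<Rightarrow>\<^sub>0 nat) \<Rightarrow> bool"
  assumes Q_add: "\<And>m n. Q (m + n) \<longleftrightarrow> Q m \<or> Q n" and "\<not> Q 0"
  shows "prime_ideal (monomial_span Q :: ('v, 'k::field) mpoly set)"
  unfolding prime_ideal_def
proof (intro conjI allI impI)
  let ?P = "monomial_span Q :: ('v, 'k) mpoly set"
  show P: "is_ideal ?P"
    using Q_add by (intro is_ideal_monomial_span) blast
  show "?P \<noteq> UNIV"
    using \<open>\<not> Q 0\<close> monomial_in_monomial_span[of 0 Q] by (auto simp: monomial_def)
  fix a b :: "('v, 'k) mpoly"
  assume ab: "a * b \<in> ?P"
  \<comment> \<open>a * b and rest a * rest b agree modulo the span, and no monomial of
     rest a * rest b lies in the span\<close>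
  define rest :: "('v, 'k) mpoly \<Rightarrow> ('v, 'k) mpoly" where
    "rest p = Abs_poly_mapping (\<lambda>m. if Q m then 0 else Poly_Mapping.lookup p m)" for p
  have lookup_rest: "Poly_Mapping.lookup (rest p) = (\<lambda>m. if Q m then 0 else Poly_Mapping.lookup p m)" for p
    unfolding rest_def
    by (rule lookup_Abs_poly_mapping) (rule finite_subset[OF _ finite_lookup[of p]], auto)
  have rest_outside: "rest p \<in> monomial_span (\<lambda>m. \<not> Q m)" for p
    by (auto simp: monomial_span_def in_keys_iff lookup_rest)
  have diff_rest: "p - rest p \<in> ?P" for p
    by (auto simp: monomial_span_def in_keys_iff lookup_rest lookup_minus split: if_splits)
  have "a * b - rest a * rest b = (a - rest a) * b + rest a * (b - rest b)"
    by (simp add: algebra_simps)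
  also have "\<dots> \<in> ?P"
    by (intro is_idealD(2)[OF P])
       (subst mult.commute, (rule is_idealD(3)[OF P diff_rest])+)
  finally have "a * b - rest a * rest b \<in> ?P" .
  then have "a * b + (- 1) * (a * b - rest a * rest b) \<in> ?P"
    by (intro is_idealD(2)[OF P ab] is_idealD(3)[OF P])
  then have "rest a * rest b \<in> ?P"
    by simp
  moreover have "rest a * rest b \<in> monomial_span (\<lambda>m. \<not> Q m)"
    using Q_add by (intro monomial_span_mult[OF _ rest_outside rest_outside]) blast
  ultimately have "Poly_Mapping.keys (rest a * rest b) = {}"
    unfolding monomial_span_def by blast
  then have "rest a = 0 \<or> rest b = 0"
    using mpoly_mult_neq_zero[of "rest a" "rest b"] by auto
  then show "a \<in> ?P \<or> b \<in> ?P"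
    using diff_rest[of a] diff_rest[of b] by (metis diff_zero)
qed

definition degree_on :: "'v set \<Rightarrow> ('v \<Rightarrow>\<^sub>0 nat) \<Rightarrow> nat" where
  "degree_on C m = (\<Sum>v\<in>C. Poly_Mapping.lookup m v)"

lemma degree_on_add: "degree_on C (m + n) = degree_on C m + degree_on C n"
  by (simp add: degree_on_def lookup_add sum.distrib)

lemma degree_on_single: "finite C \<Longrightarrow> degree_on C (Poly_Mapping.single v k) = (if v \<in> C then k else 0)"
  by (simp add: degree_on_def lookup_single when_def)

lemma lookup_sum_singles:
  "finite A \<Longrightarrow> Poly_Mapping.lookup (\<Sum>v\<in>A. Poly_Mapping.single v 1) w = (if w \<in> A then 1 else 0)"
  by (simp add: lookup_sum lookup_single when_def)

lemma degree_on_sum_singles: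
  assumes "finite C" and "finite A"
  shows "degree_on C (\<Sum>v\<in>A. Poly_Mapping.single v 1) = card (A \<inter> C)"
proof -
  have "degree_on C (\<Sum>v\<in>A. Poly_Mapping.single v 1) = (\<Sum>v\<in>A. degree_on C (Poly_Mapping.single v 1))"
    unfolding degree_on_def lookup_sum by (rule sum.swap)
  also have "\<dots> = card (A \<inter> C)"
    using assms by (simp add: degree_on_single sum.If_cases Int_def)
  finally show ?thesis .
qed

lemma degree_on_pos_iff:
  assumes "finite C"
  shows "0 < degree_on C m \<longleftrightarrow> C \<inter> Poly_Mapping.keys m \<noteq> {}"
proof -
  have "0 < degree_on C m \<longleftrightarrow> \<not> (\<forall>v\<in>C. Poly_Mapping.lookup m v = 0)"
    unfolding degree_on_def zero_less_iff_neq_zero sum_eq_0_iff[OF assms] ..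
  also have "\<dots> \<longleftrightarrow> C \<inter> Poly_Mapping.keys m \<noteq> {}"
    by (auto simp: in_keys_iff)
  finally show ?thesis .
qed

lemma mon_deg_eq_degree_on_UNIV: "mon_deg = degree_on UNIV"
  by (simp add: fun_eq_iff mon_deg_def degree_on_def)

lemma card_keys_le_mon_deg: "card (Poly_Mapping.keys m) \<le> mon_deg m"
proof -
  have "card (Poly_Mapping.keys m) = (\<Sum>v\<in>Poly_Mapping.keys m. 1)" by simp
  also have "\<dots> \<le> (\<Sum>v\<in>Poly_Mapping.keys m. Poly_Mapping.lookup m v)"
    by (rule sum_mono) (simp add: in_keys_iff)
  also have "\<dots> \<le> mon_deg m"
    unfolding mon_deg_def by (rule sum_mono2) auto
  finally show ?thesis .
qed

lemma ideal_pow_subset_degree_on: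
  assumes "I \<subseteq> monomial_span (\<lambda>m. 0 < degree_on C m)"
  shows "ideal_pow I k \<subseteq> (monomial_span (\<lambda>m. k \<le> degree_on C m) :: ('v, 'k::field) mpoly set)"
proof (induction k)
  case 0
  then show ?case by (simp add: monomial_span_def)
next
  case (Suc k)
  have "is_ideal (monomial_span (\<lambda>m. Suc k \<le> degree_on C m) :: ('v, 'k) mpoly set)"
    by (rule is_ideal_monomial_span) (simp add: degree_on_add)
  then show ?case
    unfolding ideal_pow.simps
  proof (rule ideal_mult_least)
    fix p q :: "('v, 'k) mpoly"
    assume "p \<in> I" and "q \<in> ideal_pow I k"
    then show "p * q \<in> monomial_span (\<lambda>m. Suc k \<le> degree_on C m)"
      using assms Suc by (intro monomial_span_mult[of "\<lambda>m. 0 < degree_on C m" "\<lambda>m. k \<le> degree_on C m"])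
        (auto simp: degree_on_add)
  qed
qed

section \<open>Independent sets and their neighbourhoods\<close>

definition independent :: "'v set set \<Rightarrow> 'v set \<Rightarrow> bool" where
  "independent E A \<longleftrightarrow> (\<forall>i j. {i, j} \<in> E \<longrightarrow> i \<notin> A \<or> j \<notin> A)"

definition neighbours :: "'v set set \<Rightarrow> 'v set \<Rightarrow> 'v set" where
  "neighbours E A = {u. \<exists>a\<in>A. {a, u} \<in> E}"

definition vertex_cover :: "'v set set \<Rightarrow> 'v set \<Rightarrow> bool" where
  "vertex_cover E C \<longleftrightarrow> (\<forall>i j. {i, j} \<in> E \<longrightarrow> i \<in> C \<or> j \<in> C)"

lemma simple_graph_edge_neq: "simple_graph E \<Longrightarrow> {i, j} \<in> E \<Longrightarrow> i \<noteq> j"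
  unfolding simple_graph_def by fastforce

lemma neighbours_disjoint: "independent E A \<Longrightarrow> v \<in> A \<Longrightarrow> v \<notin> neighbours E A"
  unfolding independent_def neighbours_def by blast

lemma mem_neighbours_if_not_independent_insert:
  assumes "simple_graph E" and "independent E A" and "\<not> independent E (insert v A)"
  shows "v \<in> neighbours E A"
proof -
  obtain i j where ij: "{i, j} \<in> E" "i \<in> insert v A" "j \<in> insert v A"
    using assms(3) unfolding independent_def by blast
  moreover have "i \<noteq> j" using simple_graph_edge_neq[OF assms(1) ij(1)] .
  moreover have "i \<notin> A \<or> j \<notin> A" using assms(2) ij(1) unfolding independent_def by blast
  ultimately show ?thesis unfolding neighbours_def by (auto simp: insert_commute)
qed

lemma exists_independent_neighbours_vertex_cover:
  fixes E :: "'v::finite set set"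
  assumes "simple_graph E"
  obtains A where "independent E A" and "vertex_cover E (neighbours E A)"
proof -
  have "finite {A. independent E A}" and "{} \<in> {A. independent E A}"
    by (simp_all add: independent_def)
  then obtain A where A: "independent E A"
    and maximal: "\<And>B. independent E B \<Longrightarrow> A \<subseteq> B \<Longrightarrow> A = B"
    using finite_has_maximal[of "{A. independent E A}"] by blast
  have "v \<in> neighbours E A" if "v \<notin> A" for v
    using maximal[of "insert v A"] that mem_neighbours_if_not_independent_insert[OF assms A] by blast
  then have "vertex_cover E (neighbours E A)"
    using A unfolding vertex_cover_def independent_def by blast
  with A show ?thesis by (rule that)
qed

lemma exists_edge_at_independent:
  assumes "simple_graph E" and "E \<noteq> {}" and "vertex_cover E (neighbours E A)"
  obtains a b where "a \<in> A" and "{a, b} \<in> E"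
proof -
  obtain i j where "{i, j} \<in> E"
    using assms(1,2) unfolding simple_graph_def by (metis card_2_iff ex_in_conv)
  then have "i \<in> neighbours E A \<or> j \<in> neighbours E A"
    using assms(3) unfolding vertex_cover_def by blast
  then show ?thesis
    unfolding neighbours_def using that by blast
qed

section \<open>The edge ideal and its powers\<close>

lemma var_mult_var: "var i * var j = (monomial (Poly_Mapping.single i 1 + Poly_Mapping.single j 1) :: ('v, 'k::field) mpoly)"
  by (simp add: var_eq_monomial monomial_add)

lemma var_mult_var_mem_edge_ideal: "{i, j} \<in> E \<Longrightarrow> var i * var j \<in> (edge_ideal E :: ('v, 'k::field) mpoly set)"
  unfolding edge_ideal_def by (rule subsetD[OF ideal_gen_superset]) blast

lemma is_ideal_edge_ideal: "is_ideal (edge_ideal E)"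
  unfolding edge_ideal_def by (rule is_ideal_ideal_gen)

lemma lookup_two_singles_le_iff:
  fixes m :: "'v \<Rightarrow>\<^sub>0 nat"
  assumes "i \<noteq> j"
  shows "Poly_Mapping.lookup (Poly_Mapping.single i 1 + Poly_Mapping.single j 1) \<le> Poly_Mapping.lookup m
    \<longleftrightarrow> i \<in> Poly_Mapping.keys m \<and> j \<in> Poly_Mapping.keys m"
    (is "Poly_Mapping.lookup ?n \<le> _ \<longleftrightarrow> _")
proof
  assume le: "Poly_Mapping.lookup ?n \<le> Poly_Mapping.lookup m"
  have "Poly_Mapping.lookup ?n i = 1" and "Poly_Mapping.lookup ?n j = 1"
    using assms by (simp_all add: lookup_add lookup_single)
  then show "i \<in> Poly_Mapping.keys m \<and> j \<in> Poly_Mapping.keys m"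
    using le_funD[OF le, of i] le_funD[OF le, of j] by (auto simp: in_keys_iff)
next
  assume "i \<in> Poly_Mapping.keys m \<and> j \<in> Poly_Mapping.keys m"
  then show "Poly_Mapping.lookup ?n \<le> Poly_Mapping.lookup m"
    using assms by (auto simp: le_fun_def lookup_add lookup_single when_def in_keys_iff)
qed

lemma edge_ideal_eq_monomial_span:
  assumes "simple_graph E"
  shows "edge_ideal E = (monomial_span (\<lambda>m. \<not> independent E (Poly_Mapping.keys m)) :: ('v, 'k::field) mpoly set)"
proof -
  let ?G = "{Poly_Mapping.single i 1 + Poly_Mapping.single j 1 | i j. {i, j} \<in> E}"
  have generators: "{var i * var j | i j. {i, j} \<in> E} = (monomial ` ?G :: ('v, 'k) mpoly set)"
    by (auto simp: var_mult_var)
  have "(\<exists>n\<in>?G. Poly_Mapping.lookup n \<le> Poly_Mapping.lookup m)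
      \<longleftrightarrow> \<not> independent E (Poly_Mapping.keys m)" for m :: "'v \<Rightarrow>\<^sub>0 nat"
  proof -
    have "(\<exists>n\<in>?G. Poly_Mapping.lookup n \<le> Poly_Mapping.lookup m)
        \<longleftrightarrow> (\<exists>i j. {i, j} \<in> E \<and>
              Poly_Mapping.lookup (Poly_Mapping.single i 1 + Poly_Mapping.single j 1) \<le> Poly_Mapping.lookup m)"
      by blast
    also have "\<dots> \<longleftrightarrow> (\<exists>i j. {i, j} \<in> E \<and> i \<in> Poly_Mapping.keys m \<and> j \<in> Poly_Mapping.keys m)"
      using lookup_two_singles_le_iff simple_graph_edge_neq[OF assms] by meson
    finally show ?thesis
      unfolding independent_def by blast
  qed
  then show ?thesis
    by (simp add: edge_ideal_def generators ideal_gen_monomials)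
qed

lemma edge_ideal_subset_degree_on:
  fixes C :: "'v::finite set"
  assumes "simple_graph E" and "vertex_cover E C"
  shows "edge_ideal E \<subseteq> (monomial_span (\<lambda>m. 0 < degree_on C m) :: ('v, 'k::field) mpoly set)"
proof -
  have "0 < degree_on C m" if dependent: "\<not> independent E (Poly_Mapping.keys m)" for m
  proof -
    obtain i j where "{i, j} \<in> E" "i \<in> Poly_Mapping.keys m" "j \<in> Poly_Mapping.keys m"
      using dependent unfolding independent_def by blast
    then have "C \<inter> Poly_Mapping.keys m \<noteq> {}"
      using assms(2) unfolding vertex_cover_def by blast
    then show ?thesis by (simp add: degree_on_pos_iff)
  qed
  then show ?thesis
    unfolding edge_ideal_eq_monomial_span[OF assms(1)] monomial_span_def by blast
qed

lemma colon_ideal_pow_subset_monomial_span: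
  assumes "I \<subseteq> monomial_span (\<lambda>m. 0 < degree_on C m)" and "degree_on C u = k"
  shows "colon (ideal_pow I (k + 1)) (monomial u)
           \<subseteq> (monomial_span (\<lambda>m. 0 < degree_on C m) :: ('v, 'k::field) mpoly set)"
proof
  fix g
  assume "g \<in> colon (ideal_pow I (k + 1)) (monomial u)"
  then have "monomial u * g \<in> ideal_pow I (k + 1)"
    by (simp add: colon_def mult.commute)
  also have "\<dots> \<subseteq> monomial_span (\<lambda>m. k + 1 \<le> degree_on C m)"
    by (rule ideal_pow_subset_degree_on[OF assms(1)])
  finally show "g \<in> monomial_span (\<lambda>m. 0 < degree_on C m)"
    by (auto simp: monomial_span_def keys_monomial_mult degree_on_add assms(2))
qed

definition witness_exponent :: "'v set \<Rightarrow> 'v \<Rightarrow> 'v \<Rightarrow> nat \<Rightarrow> ('v \<Rightarrow>\<^sub>0 nat)" where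
  "witness_exponent A a b k = (\<Sum>v\<in>A. Poly_Mapping.single v 1) + Poly_Mapping.single a k + Poly_Mapping.single b k"

lemma monomial_mem_colon_ideal_pow_edge_ideal:
  fixes E :: "'v::finite set set"
  assumes "independent E A" and "{a, b} \<in> E" and "c \<in> neighbours E A" and "c \<in> Poly_Mapping.keys m"
  shows "monomial m \<in> colon (ideal_pow (edge_ideal E) (k + 1)) (monomial (witness_exponent A a b k) :: ('v, 'k::field) mpoly)"
proof -
  let ?J = "ideal_pow (edge_ideal E :: ('v, 'k) mpoly set) (k + 1)" and ?u = "witness_exponent A a b k"
  obtain a' where "a' \<in> A" and "{a', c} \<in> E" and "c \<notin> A"
    using assms(3) neighbours_disjoint[OF assms(1)] unfolding neighbours_def by blast
  let ?n = "Poly_Mapping.single a' 1 + Poly_Mapping.single c 1 + (Poly_Mapping.single a k + Poly_Mapping.single b k)"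
  have "(var a' * var c) * (var a * var b) ^ k \<in> ?J"
    using ideal_mult_mem[OF var_mult_var_mem_edge_ideal power_mem_ideal_pow[OF var_mult_var_mem_edge_ideal]]
      \<open>{a', c} \<in> E\<close> assms(2) by simp
  moreover have "(var a' * var c) * (var a * var b) ^ k = (monomial ?n :: ('v, 'k) mpoly)"
    unfolding var_eq_monomial power_mult_distrib monomial_single_power monomial_add ..
  ultimately have "monomial ?n \<in> ?J"
    by simp
  moreover have "Poly_Mapping.lookup ?n \<le> Poly_Mapping.lookup (m + ?u)"
    unfolding le_fun_def
  proof
    fix v
    have "(1 when a' = v) + (1 when c = v) \<le> Poly_Mapping.lookup m v + (if v \<in> A then 1 else 0)"
      using \<open>a' \<in> A\<close> \<open>c \<notin> A\<close> assms(4) by (auto simp: when_def in_keys_iff)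
    then show "Poly_Mapping.lookup ?n v \<le> Poly_Mapping.lookup (m + ?u) v"
      unfolding witness_exponent_def lookup_add lookup_single lookup_sum_singles[OF finite] by linarith
  qed
  ultimately have "monomial (m + ?u) \<in> ?J"
    by (rule monomial_mem_if_divides[OF is_ideal_ideal_pow])
  then show ?thesis
    unfolding colon_def monomial_add by simp
qed

lemma colon_ideal_pow_edge_ideal:
  fixes E :: "'v::finite set set"
  assumes "simple_graph E" and "independent E A" and "vertex_cover E (neighbours E A)"
    and "a \<in> A" and "{a, b} \<in> E"
  shows "colon (ideal_pow (edge_ideal E) (k + 1)) (monomial (witness_exponent A a b k))
           = (monomial_span (\<lambda>m. 0 < degree_on (neighbours E A) m) :: ('v, 'k::field) mpoly set)"
proof
  let ?N = "neighbours E A"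
  have "b \<in> ?N" using assms(4,5) unfolding neighbours_def by blast
  moreover have "a \<notin> ?N" and "A \<inter> ?N = {}"
    using neighbours_disjoint[OF assms(2)] assms(4) by blast+
  moreover have "degree_on ?N (\<Sum>v\<in>A. Poly_Mapping.single v 1) = card (A \<inter> ?N)"
    by (rule degree_on_sum_singles) simp_all
  ultimately have "degree_on ?N (witness_exponent A a b k) = k"
    by (simp add: witness_exponent_def degree_on_add degree_on_single)
  then show "colon (ideal_pow (edge_ideal E) (k + 1)) (monomial (witness_exponent A a b k))
      \<subseteq> (monomial_span (\<lambda>m. 0 < degree_on ?N m) :: ('v, 'k) mpoly set)"
    by (rule colon_ideal_pow_subset_monomial_span[OF edge_ideal_subset_degree_on[OF assms(1,3)]])
  show "monomial_span (\<lambda>m. 0 < degree_on ?N m)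
      \<subseteq> colon (ideal_pow (edge_ideal E) (k + 1)) (monomial (witness_exponent A a b k) :: ('v, 'k) mpoly)"
  proof
    fix g :: "('v, 'k) mpoly"
    assume g: "g \<in> monomial_span (\<lambda>m. 0 < degree_on ?N m)"
    show "g \<in> colon (ideal_pow (edge_ideal E) (k + 1)) (monomial (witness_exponent A a b k))"
    proof (rule mem_ideal_if_monomials_mem[OF is_ideal_colon[OF is_ideal_ideal_pow]])
      fix m
      assume "m \<in> Poly_Mapping.keys g"
      then have "0 < degree_on ?N m" using g by (simp add: monomial_span_def)
      then obtain c where "c \<in> ?N" and "c \<in> Poly_Mapping.keys m"
        by (auto simp: degree_on_pos_iff)
      then show "monomial m \<in> colon (ideal_pow (edge_ideal E) (k + 1)) (monomial (witness_exponent A a b k))"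
        by (rule monomial_mem_colon_ideal_pow_edge_ideal[OF assms(2,5)])
    qed
  qed
qed

lemma prime_colon_ideal_pow_edge_ideal:
  fixes E :: "'v::finite set set"
  assumes "simple_graph E" and "independent E A" and "vertex_cover E (neighbours E A)"
    and "a \<in> A" and "{a, b} \<in> E"
  shows "homogeneous_of_deg (card A + 2 * k) (monomial (witness_exponent A a b k) :: ('v, 'k::field) mpoly)"
    and "prime_ideal (colon (ideal_pow (edge_ideal E) (k + 1)) (monomial (witness_exponent A a b k) :: ('v, 'k) mpoly))"
proof -
  have "a \<noteq> b" using simple_graph_edge_neq[OF assms(1,5)] .
  moreover have "degree_on UNIV (\<Sum>v\<in>A. Poly_Mapping.single v 1) = card A"
    using degree_on_sum_singles[of UNIV A] by simp
  ultimately have "mon_deg (witness_exponent A a b k) = card A + 2 * k"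
    by (simp add: witness_exponent_def mon_deg_eq_degree_on_UNIV degree_on_add degree_on_single)
  then show "homogeneous_of_deg (card A + 2 * k) (monomial (witness_exponent A a b k) :: ('v, 'k) mpoly)"
    by (simp add: homogeneous_of_deg_def monomial_def)
  show "prime_ideal (colon (ideal_pow (edge_ideal E) (k + 1)) (monomial (witness_exponent A a b k) :: ('v, 'k) mpoly))"
    unfolding colon_ideal_pow_edge_ideal[OF assms]
    by (rule prime_ideal_monomial_span) (simp_all add: degree_on_add, simp add: degree_on_def)
qed

lemma vertex_cover_variables_of_prime_ideal:
  fixes P :: "('v, 'k::field) mpoly set"
  assumes "prime_ideal P" and "edge_ideal E \<subseteq> P"
  shows "vertex_cover E {v. var v \<in> P}"
  unfolding vertex_cover_def
proof (intro allI impI)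
  fix i j
  assume "{i, j} \<in> E"
  then have "var i * var j \<in> P"
    by (rule subsetD[OF assms(2) var_mult_var_mem_edge_ideal])
  with assms(1) show "i \<in> {v. var v \<in> P} \<or> j \<in> {v. var v \<in> P}"
    unfolding prime_ideal_def by blast
qed

lemma independent_neighbours_of_prime_colon_edge_ideal:
  fixes E :: "'v::finite set set" and f :: "('v, 'k::field) mpoly"
  assumes "simple_graph E" and "homogeneous_of_deg d f" and prime: "prime_ideal (colon (edge_ideal E) f)"
  obtains A where "independent E A" and "vertex_cover E (neighbours E A)" and "card A \<le> d"
proof -
  let ?I = "edge_ideal E :: ('v, 'k) mpoly set" and ?P = "colon (edge_ideal E) f"
  note I_eq = edge_ideal_eq_monomial_span[OF assms(1)]
  have "f \<notin> ?I"
  proof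
    assume "f \<in> ?I"
    then have "?P = UNIV"
      unfolding colon_def using is_idealD(3)[OF is_ideal_edge_ideal] by blast
    with prime show False by (simp add: prime_ideal_def)
  qed
  then obtain m where m: "m \<in> Poly_Mapping.keys f" and indep: "independent E (Poly_Mapping.keys m)"
    unfolding I_eq monomial_span_def by blast
  have "card (Poly_Mapping.keys m) \<le> d"
    using card_keys_le_mon_deg[of m] assms(2) m by (simp add: homogeneous_of_deg_def)
  have "vertex_cover E {v. var v \<in> ?P}"
    by (rule vertex_cover_variables_of_prime_ideal[OF prime ideal_subset_colon[OF is_ideal_edge_ideal]])
  moreover have "{v. var v \<in> ?P} \<subseteq> neighbours E (Poly_Mapping.keys m)"
  proof
    fix v
    assume "v \<in> {v. var v \<in> ?P}"
    then have "var v * f \<in> ?I"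
      by (simp add: colon_def)
    moreover have "Poly_Mapping.single v 1 + m \<in> Poly_Mapping.keys (var v * f)"
      using m by (simp add: var_eq_monomial keys_monomial_mult)
    ultimately have "\<not> independent E (Poly_Mapping.keys (Poly_Mapping.single v 1 + m))"
      unfolding I_eq monomial_span_def by blast
    then have "\<not> independent E (insert v (Poly_Mapping.keys m))"
      by (simp add: keys_single_add)
    then show "v \<in> neighbours E (Poly_Mapping.keys m)"
      by (rule mem_neighbours_if_not_independent_insert[OF assms(1) indep])
  qed
  ultimately have "vertex_cover E (neighbours E (Poly_Mapping.keys m))"
    unfolding vertex_cover_def by blast
  with indep \<open>card (Poly_Mapping.keys m) \<le> d\<close> show ?thesis
    using that by blast
qed

section \<open>The v-number\<close>

lemma v_number_le:
  "homogeneous_of_deg k f \<Longrightarrow> prime_ideal (colon J f) \<Longrightarrow> v_number J \<le> k"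
  unfolding v_number_def ass_def by (rule Least_le) blast

lemma v_number_attained:
  assumes "homogeneous_of_deg k f" and "prime_ideal (colon J f)"
  obtains g where "homogeneous_of_deg (v_number J) g" and "prime_ideal (colon J g)"
proof -
  have "\<exists>g P. homogeneous_of_deg (v_number J) g \<and> P \<in> ass J \<and> colon J g = P"
    unfolding v_number_def by (rule LeastI[of _ k]) (use assms in \<open>auto simp: ass_def\<close>)
  then show ?thesis using that by (auto simp: ass_def)
qed

lemma v_number_ideal_pow_edge_ideal_le:
  fixes E :: "'v::finite set set"
  assumes "simple_graph E" and "E \<noteq> {}" and "independent E A" and "vertex_cover E (neighbours E A)"
  shows "v_number (ideal_pow (edge_ideal E :: ('v, 'k::field) mpoly set) (k + 1)) \<le> card A + 2 * k"
proof -
  obtain a b where "a \<in> A" and "{a, b} \<in> E"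
    using exists_edge_at_independent[OF assms(1,2,4)] .
  note witness = prime_colon_ideal_pow_edge_ideal[OF assms(1,3,4) this, where k = k]
  show ?thesis
    by (rule v_number_le[OF witness])
qed

lemma v_number_edge_ideal_attained_by_independent:
  fixes E :: "'v::finite set set"
  assumes "simple_graph E" and "E \<noteq> {}"
  obtains A where "independent E A" and "vertex_cover E (neighbours E A)"
    and "card A \<le> v_number (edge_ideal E :: ('v, 'k::field) mpoly set)"
proof -
  let ?I = "edge_ideal E :: ('v, 'k) mpoly set"
  obtain A0 where A0: "independent E A0" "vertex_cover E (neighbours E A0)"
    using exists_independent_neighbours_vertex_cover[OF assms(1)] .
  obtain a b where "a \<in> A0" and "{a, b} \<in> E"
    using exists_edge_at_independent[OF assms A0(2)] .
  then have "homogeneous_of_deg (card A0 + 2 * 0) (monomial (witness_exponent A0 a b 0) :: ('v, 'k) mpoly)"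
    and "prime_ideal (colon (ideal_pow ?I (0 + 1)) (monomial (witness_exponent A0 a b 0)))"
    using prime_colon_ideal_pow_edge_ideal[OF assms(1) A0] by blast+
  then obtain f where "homogeneous_of_deg (v_number ?I) f" and "prime_ideal (colon ?I f)"
    using v_number_attained ideal_pow_1[OF is_ideal_edge_ideal] by (metis One_nat_def add_0)
  then show ?thesis
    using independent_neighbours_of_prime_colon_edge_ideal[OF assms(1)] that by blast
qed

theorem proposition4p15:
  fixes E :: "'v::finite set set"
  assumes "simple_graph E" and "E \<noteq> {}" and "n \<ge> 1"
  shows "v_number (ideal_pow (edge_ideal E :: ('v, 'k::field) mpoly set) (n + 1))
           \<le> 2 * n + v_number (edge_ideal E :: ('v, 'k) mpoly set)"
proof -
  \<comment> \<open>the bound holds for n = 0 as well\<close>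
  obtain A where "independent E A" and "vertex_cover E (neighbours E A)"
    and "card A \<le> v_number (edge_ideal E :: ('v, 'k) mpoly set)"
    using v_number_edge_ideal_attained_by_independent[OF assms(1,2)] .
  moreover have "v_number (ideal_pow (edge_ideal E :: ('v, 'k) mpoly set) (n + 1)) \<le> card A + 2 * n"
    using v_number_ideal_pow_edge_ideal_le[OF assms(1,2) calculation(1,2)] .
  ultimately show ?thesis by linarith
qed

end
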